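(* Let $D\subset\mathbb{C}$ be an open disk centered at the origin, let $f_1,\dots,f_p:D\to\mathbb{C}$ be analytic, let $A_1,\dots,A_p\in\mathbb{C}^{n\times n}$, and let $M(\lambda)=\sum_{m=1}^p f_m(\lambda)A_m$. Assume $M$ is symmetric, i.e. $M(\lambda)^T=M(\lambda)$ for all $\lambda\in D$ (transpose, not conjugate transpose). Put $M_j:=M^{(j)}(0)$ for $j\ge 0$. The relations $$c_{i,1}=\frac{1}{i+1}\quad (i\ge 1),\qquad c_{i-1,j}=\frac{j}{i}\,c_{i,j-1}\quad (i,j>1)$$ uniquely determine an infinite scalar matrix $\mathbf{C}=[c_{i,j}]_{i,j=1}^\infty$. Define the infinite block matrix $\mathbf{S}=[S_{i,j}]_{i,j=1}^\infty$ with $n\times n$ blocks by $S_{1,1}=I$, $S_{1,j}=S_{j,1}=0$ for $j\ge 2$, and $S_{i,j}=c_{i-1,j-1}M_{i+j-2}$ for $i,j\ge 2$. Let $\mathbf{A}=\operatorname{diag}(-M_0,I,I,I,\dots)$ (block diagonal), and let $\mathbf{B}$ be the infinite block matrix whose first block row is $\big(M_1,\tfrac12 M_2,\tfrac13 M_3,\tfrac14 M_4,\dots\big)$, whose blocks in positions $(j+1,j)$ are $\tfrac1j I$ for $j\ge1$, and whose other blocks are zero. Then $\mathbf{S}$ is a symmetrizer for the infinite linear eigenvalue problem $\mathbf{A}\mathbf{x}=\lambda\mathbf{B}\mathbf{x}$: the infinite matrices $\mathbf{S}\mathbf{A}$ and $\mathbf{S}\mathbf{B}$ (each block of which is a finite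 sum) are symmetric, so that $\mathbf{S}\mathbf{A}\mathbf{x}=\lambda\mathbf{S}\mathbf{B}\mathbf{x}$ is a symmetric eigenvalue problem.
   Context: The infinite eigenvalue problem $\mathbf{A}\mathbf{x}=\lambda\mathbf{B}\mathbf{x}$ is a linearization of $M(\lambda)x=0$: if $M(\lambda)x=0$ then $\mathbf{x}=\big(\tfrac{\lambda^0}{0!}x,\tfrac{\lambda^1}{1!}x,\tfrac{\lambda^2}{2!}x,\dots\big)$ satisfies it. Symmetric for an infinite block matrix means its $(i,j)$ block equals the transpose of its $(j,i)$ block. *)

theory Defs
  imports "HOL-Analysis.Analysis"
begin

definition Mfun :: "nat \<Rightarrow> (nat \<Rightarrow> complex \<Rightarrow> complex) \<Rightarrow> (nat \<Rightarrow> complex^'n^'n) \<Rightarrow> complex \<Rightarrow> complex^'n^'n"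
  where "Mfun p f A z = (\<chi> a b. \<Sum>m=1..p. f m z * A m $ a $ b)"

definition Mder :: "(complex \<Rightarrow> complex^'n^'n) \<Rightarrow> nat \<Rightarrow> complex^'n^'n"
  where "Mder M j = (\<chi> a b. (deriv ^^ j) (\<lambda>z. M z $ a $ b) 0)"

definition cscale :: "complex \<Rightarrow> complex^'n^'n \<Rightarrow> complex^'n^'n"
  where "cscale c X = (\<chi> a b. c * X $ a $ b)"

definition C_rel :: "(nat \<Rightarrow> nat \<Rightarrow> complex) \<Rightarrow> bool"
  where "C_rel c \<longleftrightarrow> (\<forall>i\<ge>1. c i 1 = 1 / of_nat (i + 1)) \<and>
      (\<forall>i>1. \<forall>j>1. c (i - 1) j = of_nat j / of_nat i * c i (j - 1))"

definition Cmat :: "nat \<Rightarrow> nat \<Rightarrow> complex"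
  where "Cmat = (SOME c. C_rel c)"

text \<open>Infinite block matrices are functions nat => nat => block, blocks indexed from 1;
  index 0 is unused.\<close>

definition Smat :: "(complex \<Rightarrow> complex^'n^'n) \<Rightarrow> nat \<Rightarrow> nat \<Rightarrow> complex^'n^'n"
  where "Smat M i j = (if i = 1 \<and> j = 1 then mat 1
      else if i = 1 \<or> j = 1 then 0
      else cscale (Cmat (i - 1) (j - 1)) (Mder M (i + j - 2)))"

definition Amat :: "(complex \<Rightarrow> complex^'n^'n) \<Rightarrow> nat \<Rightarrow> nat \<Rightarrow> complex^'n^'n"
  where "Amat M i j = (if i \<noteq> j then 0 else if i = 1 then - Mder M 0 else mat 1)"

definition Bmat :: "(complex \<Rightarrow> complex^'n^'n) \<Rightarrow> nat \<Rightarrow> nat \<Rightarrow> complex^'n^'n"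
  where "Bmat M i j = (if i = 1 then cscale (1 / of_nat j) (Mder M j)
      else if i = j + 1 then cscale (1 / of_nat j) (mat 1) else 0)"

definition bmult :: "(nat \<Rightarrow> nat \<Rightarrow> complex^'n^'n) \<Rightarrow> (nat \<Rightarrow> nat \<Rightarrow> complex^'n^'n) \<Rightarrow> nat \<Rightarrow> nat \<Rightarrow> complex^'n^'n"
  where "bmult X Y i j = infsum (\<lambda>k. X i k ** Y k j) {1..}"

definition bsymmetric :: "(nat \<Rightarrow> nat \<Rightarrow> complex^'n^'n) \<Rightarrow> bool"
  where "bsymmetric X \<longleftrightarrow> (\<forall>i\<ge>1. \<forall>j\<ge>1. X i j = transpose (X j i))"

end

theory Submission
  imports Defs
begin

text \<open>
  The relations for \<open>C\<close> determine each column from the previous one, and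
  \<open>c\<^sub>i\<^sub>j = i! j! / (i + j)!\<close> satisfies them; so \<open>C\<close> is symmetric, and moreover
  \<open>c\<^bsub>i-1,j\<^esub> / j = (i - 1)! (j - 1)! / (i + j - 1)!\<close> is symmetric in \<open>i, j\<close>.
  Since \<open>A\<close> is block diagonal and every block column of \<open>B\<close> has at most two nonzero
  blocks, \<open>SA\<close> is \<open>S\<close> with its corner replaced by \<open>-M\<^sub>0\<close>, and
  \<open>(SB)\<^sub>i\<^sub>j = c\<^bsub>i-1,j\<^esub> / j \<cdot> M\<^bsub>i+j-1\<^esub>\<close> (with \<open>c\<^bsub>0,j\<^esub> = 1\<close>). Both are symmetric
  as soon as every \<open>M\<^sub>k\<close> is, and that holds because the entries \<open>(a,b)\<close> and \<open>(b,a)\<close>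
  of \<open>M\<close> agree near \<open>0\<close>.
\<close>

definition C_closed :: "nat \<Rightarrow> nat \<Rightarrow> complex"
  where "C_closed i j = fact i * fact j / fact (i + j)"

lemma C_rel_Suc_iff:
  "C_rel c \<longleftrightarrow> (\<forall>i\<ge>1. c i 1 = 1 / of_nat (Suc i)) \<and>
     (\<forall>i\<ge>1. \<forall>j\<ge>1. c i (Suc j) = of_nat (Suc j) / of_nat (Suc i) * c (Suc i) j)"
proof -
  have shift: "(\<forall>i>1. \<forall>j>1. P (i - 1) (j - 1)) \<longleftrightarrow> (\<forall>i\<ge>1. \<forall>j\<ge>1. P i j)"
    for P :: "nat \<Rightarrow> nat \<Rightarrow> bool"
  proof
    assume "\<forall>i>1. \<forall>j>1. P (i - 1) (j - 1)"
    then show "\<forall>i\<ge>1. \<forall>j\<ge>1. P i j"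
      by (metis One_nat_def Suc_le_eq diff_Suc_1 not_less_eq_eq)
  qed auto
  show ?thesis
    using shift[of "\<lambda>i j. c i (Suc j) = of_nat (Suc j) / of_nat (Suc i) * c (Suc i) j"]
    unfolding C_rel_def by simp
qed

lemma C_closed_Suc_right:
  "C_closed i (Suc j) = of_nat (Suc j) * (fact i * fact j / fact (Suc (i + j)))"
  unfolding C_closed_def by (simp del: of_nat_Suc)

lemma C_closed_Suc_left:
  "C_closed (Suc i) j = of_nat (Suc i) * (fact i * fact j / fact (Suc (i + j)))"
  unfolding C_closed_def by (simp del: of_nat_Suc)

lemma C_rel_C_closed: "C_rel C_closed"
  unfolding C_rel_Suc_iff
proof (intro conjI allI impI)
  fix i j :: nat
  show "C_closed i 1 = 1 / of_nat (Suc i)"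
    using C_closed_Suc_right[of i 0] by (simp del: of_nat_Suc)
  show "C_closed i (Suc j) = of_nat (Suc j) / of_nat (Suc i) * C_closed (Suc i) j"
    unfolding C_closed_Suc_right C_closed_Suc_left by (simp del: of_nat_Suc)
qed

lemma C_rel_imp_C_closed:
  assumes "C_rel c" "i \<ge> 1" "j \<ge> 1"
  shows "c i j = C_closed i j"
  using assms(3,2)
proof (induction j arbitrary: i rule: nat_induct_at_least)
  case base
  then show ?case using assms(1) C_rel_C_closed unfolding C_rel_Suc_iff by simp
next
  case (Suc j)
  then show ?case using assms(1) C_rel_C_closed unfolding C_rel_Suc_iff by simp
qed

lemma C_rel_Cmat: "C_rel Cmat"
  unfolding Cmat_def by (rule someI[of C_rel, OF C_rel_C_closed])

lemma Cmat_eq_C_closed: "i \<ge> 1 \<Longrightarrow> j \<ge> 1 \<Longrightarrow> Cmat i j = C_closed i j"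
  by (rule C_rel_imp_C_closed[OF C_rel_Cmat])

lemma C_closed_commute: "C_closed i j = C_closed j i"
  unfolding C_closed_def by (simp add: add.commute mult.commute)

lemma C_closed_Suc_div_commute:
  "C_closed i (Suc j) / of_nat (Suc j) = C_closed j (Suc i) / of_nat (Suc i)"
  unfolding C_closed_Suc_right by (simp add: add.commute mult.commute del: of_nat_Suc)

lemma transpose_uminus: "transpose (- X) = - transpose (X :: 'a::ab_group_add^'n^'m)"
  by (simp add: vec_eq_iff transpose_def)

lemma transpose_zero: "transpose (0 :: 'a::zero^'n^'m) = 0"
  by (simp add: vec_eq_iff transpose_def)

lemma transpose_cscale: "transpose (cscale c X) = cscale c (transpose X)"
  unfolding cscale_def by (simp add: vec_eq_iff transpose_def)

lemma cscale_cscale: "cscale a (cscale b X) = cscale (b * a) X"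
  unfolding cscale_def by (simp add: vec_eq_iff mult.assoc)

lemma matrix_mul_cscale_mat: "X ** cscale c (mat 1) = cscale c X"
  unfolding matrix_matrix_mult_def cscale_def mat_def
  by (auto simp: vec_eq_iff if_distrib if_distribR sum.delta'[OF finite] mult.commute cong: if_cong)

lemma
  assumes "finite F" "\<And>k. k \<ge> 1 \<Longrightarrow> k \<notin> F \<Longrightarrow> X i k ** Y k j = 0"
  shows finite_bmult_support: "finite {k. k \<ge> 1 \<and> X i k ** Y k j \<noteq> 0}"
    and bmult_eq_sum: "F \<subseteq> {1..} \<Longrightarrow> bmult X Y i j = (\<Sum>k\<in>F. X i k ** Y k j)"
proof -
  show "finite {k. k \<ge> 1 \<and> X i k ** Y k j \<noteq> 0}"
    by (rule finite_subset[OF _ assms(1)]) (use assms(2) in auto)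
  assume "F \<subseteq> {1..}"
  then have "bmult X Y i j = infsum (\<lambda>k. X i k ** Y k j) F"
    unfolding bmult_def by (intro infsum_cong_neutral) (use assms(2) in auto)
  then show "bmult X Y i j = (\<Sum>k\<in>F. X i k ** Y k j)"
    using assms(1) by simp
qed

lemma Smat_Amat_eq_0: "k \<noteq> j \<Longrightarrow> Smat M i k ** Amat M k j = 0"
  unfolding Amat_def by simp

lemma Smat_Bmat_eq_0: "k \<noteq> 1 \<Longrightarrow> k \<noteq> Suc j \<Longrightarrow> Smat M i k ** Bmat M k j = 0"
  unfolding Bmat_def by simp

lemma bmult_Smat_Amat:
  assumes "j \<ge> 1"
  shows "bmult (Smat M) (Amat M) i j = (if i = 1 \<and> j = 1 then - Mder M 0 else Smat M i j)"
proof -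
  have "bmult (Smat M) (Amat M) i j = (\<Sum>k\<in>{j}. Smat M i k ** Amat M k j)"
    by (rule bmult_eq_sum) (use assms Smat_Amat_eq_0 in auto)
  then show ?thesis
    unfolding Amat_def by (simp add: Smat_def)
qed

lemma bmult_Smat_Bmat:
  assumes "i \<ge> 1" "j \<ge> 1"
  shows "bmult (Smat M) (Bmat M) i j = cscale (C_closed (i - 1) j / of_nat j) (Mder M (i + j - 1))"
proof -
  have "bmult (Smat M) (Bmat M) i j = (\<Sum>k\<in>{1, Suc j}. Smat M i k ** Bmat M k j)"
    by (rule bmult_eq_sum) (use assms Smat_Bmat_eq_0 in auto)
  also have "\<dots> = Smat M i 1 ** Bmat M 1 j + Smat M i (Suc j) ** Bmat M (Suc j) j"
    using assms by simp
  also have "\<dots> = cscale (C_closed (i - 1) j / of_nat j) (Mder M (i + j - 1))"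
  proof (cases "i = 1")
    case True
    then show ?thesis
      using assms unfolding Smat_def Bmat_def C_closed_def by simp
  next
    case False
    then show ?thesis
      using assms unfolding Smat_def Bmat_def
      by (simp add: matrix_mul_cscale_mat Cmat_eq_C_closed cscale_cscale)
  qed
  finally show ?thesis .
qed

lemma transpose_Smat:
  assumes "\<And>k. transpose (Mder M k) = Mder M k" "i \<ge> 1" "j \<ge> 1"
  shows "transpose (Smat M i j) = Smat M j i"
  using assms unfolding Smat_def
  by (auto simp: transpose_cscale transpose_zero Cmat_eq_C_closed C_closed_commute add.commute)

lemma bsymmetric_Smat_Amat:
  assumes "\<And>k. transpose (Mder M k) = Mder M k"
  shows "bsymmetric (bmult (Smat M) (Amat M))"
  unfolding bsymmetric_def
  by (simp add: bmult_Smat_Amat transpose_Smat assms transpose_uminus)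

lemma bsymmetric_Smat_Bmat:
  assumes "\<And>k. transpose (Mder M k) = Mder M k"
  shows "bsymmetric (bmult (Smat M) (Bmat M))"
  unfolding bsymmetric_def
proof (intro allI impI)
  fix i j :: nat
  assume "i \<ge> 1" "j \<ge> 1"
  moreover obtain a b where "i = Suc a" "j = Suc b"
    using \<open>i \<ge> 1\<close> \<open>j \<ge> 1\<close> by (metis Suc_le_D One_nat_def)
  ultimately show "bmult (Smat M) (Bmat M) i j = transpose (bmult (Smat M) (Bmat M) j i)"
    using assms C_closed_Suc_div_commute[of a b]
    by (simp add: bmult_Smat_Bmat transpose_cscale add.commute)
qed

lemma symmetric_Mder:
  assumes "open S" "0 \<in> S" "\<And>z. z \<in> S \<Longrightarrow> transpose (M z) = M z"
  shows "transpose (Mder M j) = Mder M j"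
proof -
  have "(deriv ^^ j) (\<lambda>z. M z $ a $ b) 0 = (deriv ^^ j) (\<lambda>z. M z $ b $ a) 0" for a b
  proof (rule higher_deriv_cong_ev)
    have "M z $ a $ b = M z $ b $ a" if "z \<in> S" for z
      using arg_cong[OF assms(3)[OF that], of "\<lambda>X. X $ a $ b"] by (simp add: transpose_def)
    then show "\<forall>\<^sub>F z in nhds 0. M z $ a $ b = M z $ b $ a"
      using eventually_nhds_in_open[OF assms(1,2)] by (rule eventually_mono[rotated])
  qed simp
  then show ?thesis
    unfolding Mder_def transpose_def by (simp add: vec_eq_iff)
qed

theorem theorem2:
  fixes r :: real and p :: nat
    and f :: "nat \<Rightarrow> complex \<Rightarrow> complex"
    and A :: "nat \<Rightarrow> complex^'n^'n"
  assumes "r > 0"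
    and "\<And>m. m \<in> {1..p} \<Longrightarrow> f m holomorphic_on ball 0 r"
    and "\<And>z. z \<in> ball 0 r \<Longrightarrow> transpose (Mfun p f A z) = Mfun p f A z"
  shows "C_rel Cmat
    \<and> (\<forall>c. C_rel c \<longrightarrow> (\<forall>i\<ge>1. \<forall>j\<ge>1. c i j = Cmat i j))
    \<and> (\<forall>i\<ge>1. \<forall>j\<ge>1. finite {k. k \<ge> 1 \<and> Smat (Mfun p f A) i k ** Amat (Mfun p f A) k j \<noteq> 0})
    \<and> (\<forall>i\<ge>1. \<forall>j\<ge>1. finite {k. k \<ge> 1 \<and> Smat (Mfun p f A) i k ** Bmat (Mfun p f A) k j \<noteq> 0})
    \<and> bsymmetric (bmult (Smat (Mfun p f A)) (Amat (Mfun p f A)))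
    \<and> bsymmetric (bmult (Smat (Mfun p f A)) (Bmat (Mfun p f A)))"
proof -
  let ?M = "Mfun p f A"
  have Mder_M_symmetric: "transpose (Mder ?M k) = Mder ?M k" for k
    using assms(1,3) by (intro symmetric_Mder[of "ball 0 r"]) auto
  have "finite {k. k \<ge> 1 \<and> Smat ?M i k ** Amat ?M k j \<noteq> 0}" for i j
    by (rule finite_bmult_support[of "{j}"]) (auto simp: Smat_Amat_eq_0)
  moreover have "finite {k. k \<ge> 1 \<and> Smat ?M i k ** Bmat ?M k j \<noteq> 0}" for i j
    by (rule finite_bmult_support[of "{1, Suc j}"]) (auto simp: Smat_Bmat_eq_0)
  moreover have "C_rel c \<Longrightarrow> i \<ge> 1 \<Longrightarrow> j \<ge> 1 \<Longrightarrow> c i j = Cmat i j" for c i j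
    by (simp add: C_rel_imp_C_closed Cmat_eq_C_closed)
  ultimately show ?thesis
    using C_rel_Cmat bsymmetric_Smat_Amat[OF Mder_M_symmetric] bsymmetric_Smat_Bmat[OF Mder_M_symmetric]
    by blast
qed

end
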